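(* Let $h>0$, $0\le\alpha<1/4$, $g=(0,0)$, $t=\dfrac{2h}{\tan(\pi/4-\alpha)}$, $s_p=(-t/2,h)$ and $s_q=(t/2,h)$. Then the worst-case uncertainty of this pair satisfies $$\varepsilon(g,\{s_p,s_q\})\;\le\;\sqrt{\frac{1+2\alpha}{1-4\alpha}}\cdot\frac{2h\sin(2\alpha)}{1-\sin(2\alpha)}.$$
   Context: Work in $\mathbb{R}^2$ with coordinates $(x,z)$. The ground line is $G=\{z=0\}$ and the viewing line is $S=\{z=h\}$, $h>0$. Fix $\alpha>0$. For a point $s$ and a unit vector $u$, the wedge $W(s,u)=\{s+rv:\ r\ge 0,\ |v|=1,\ \angle(v,u)\le\alpha\}$ (apex $s$, opening angle $2\alpha$). For a target $g$ and camera location $s$, $\mathcal W(g,s)$ is the set of all wedges $W(s,u)$ containing $g$. For $C\subseteq S$, $\varepsilon(g,C)=\sup\{\operatorname{diam}(\bigcap_{s\in C}W_s): W_s\in\mathcal W(g,s)\ \forall s\in C\}$. *)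

theory Defs
  imports "HOL-Analysis.Analysis"
begin

type_synonym pt = "real \<times> real"

definition ang :: "pt \<Rightarrow> pt \<Rightarrow> real" where
  "ang v u = arccos (v \<bullet> u)"

definition wedge :: "real \<Rightarrow> pt \<Rightarrow> pt \<Rightarrow> pt set" where
  "wedge \<alpha> s u = {s + r *\<^sub>R v | r v. r \<ge> 0 \<and> norm v = 1 \<and> ang v u \<le> \<alpha>}"

definition wedges :: "real \<Rightarrow> pt \<Rightarrow> pt \<Rightarrow> pt set set" where
  "wedges \<alpha> g s = {wedge \<alpha> s u | u. norm u = 1 \<and> g \<in> wedge \<alpha> s u}"

definition ediam :: "pt set \<Rightarrow> ereal" where
  "ediam S = (if S = {} then 0 else Sup {ereal (dist x y) | x y. x \<in> S \<and> y \<in> S})"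

definition eps :: "real \<Rightarrow> pt \<Rightarrow> pt set \<Rightarrow> ereal" where
  "eps \<alpha> g C = Sup {ediam (\<Inter>s\<in>C. W s) | W. \<forall>s\<in>C. W s \<in> wedges \<alpha> g s}"

end

theory Submission
  imports Defs
begin

text \<open>The rays from the two cameras to the target make the angle \<open>\<beta> = \<pi>/4 - \<alpha>\<close> with the viewing
  line, hence meet at the target at the angle \<open>\<pi>/2 + 2\<alpha>\<close>. Every direction of an admissible wedge
  at one camera lies within \<open>2\<alpha>\<close> of that camera's ray, while the whole wedge at the other camera
  lies behind the line through it orthogonal to this ray. So a point seen by both cameras is at
  distance at most \<open>R = t cos \<beta> / cos 2\<alpha>\<close> from each camera, and two such points differ by at most
  \<open>2 R sin \<alpha>\<close> across each ray. The two normals of the rays span the plane well enough to turn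
  these lateral bounds into
  \<open>dist x y \<le> 4 h sin \<alpha> (1 + sin 2\<alpha>) / (cos 2\<alpha> (1 - sin 2\<alpha>))\<close>, and an elementary estimate of
  \<open>(1 + sin 2\<alpha>) / cos 2\<alpha>\<close> gives the stated bound.\<close>

text \<open>The wedge \<open>W(p, u)\<close> with the angle condition written as \<open>cos \<alpha> \<le> v \<bullet> u\<close>, which makes
  sense in every real inner product space.\<close>
definition circular_cone :: "real \<Rightarrow> 'a::real_inner \<Rightarrow> 'a \<Rightarrow> 'a set" where
  "circular_cone \<alpha> p u = {p + r *\<^sub>R v | r v. 0 \<le> r \<and> norm v = 1 \<and> cos \<alpha> \<le> v \<bullet> u}"

lemma wedge_subset_circular_cone:
  assumes "norm u = 1" "0 \<le> \<alpha>" "\<alpha> \<le> pi"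
  shows "wedge \<alpha> s u \<subseteq> circular_cone \<alpha> s u"
proof
  fix x assume "x \<in> wedge \<alpha> s u"
  then obtain r v where x: "x = s + r *\<^sub>R v" "0 \<le> r" "norm v = 1" "arccos (v \<bullet> u) \<le> \<alpha>"
    unfolding wedge_def ang_def by blast
  have "\<bar>v \<bullet> u\<bar> \<le> 1"
    using Cauchy_Schwarz_ineq2[of v u] assms(1) x(3) by simp
  then have "cos \<alpha> \<le> cos (arccos (v \<bullet> u))"
    using x(4) assms(2,3) by (subst cos_mono_le_eq) (auto intro: arccos_lbound arccos_ubound)
  with \<open>\<bar>v \<bullet> u\<bar> \<le> 1\<close> have "cos \<alpha> \<le> v \<bullet> u" by simp
  with x show "x \<in> circular_cone \<alpha> s u" unfolding circular_cone_def by blast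
qed

lemma circular_cone_axis:
  fixes p e u :: "'a::real_inner"
  assumes "p + d *\<^sub>R e \<in> circular_cone \<alpha> p u" "0 < d" "norm e = 1"
  shows "cos \<alpha> \<le> e \<bullet> u"
proof -
  obtain r v where rv: "d *\<^sub>R e = r *\<^sub>R v" "0 \<le> r" "norm v = 1" "cos \<alpha> \<le> v \<bullet> u"
    using assms(1) unfolding circular_cone_def by auto
  have "d = r" using arg_cong[OF rv(1), of norm] assms(2,3) rv(2,3) by simp
  then have "e = v" using rv(1) assms(2) by simp
  with rv(4) show ?thesis by simp
qed

lemma norm_add_unit_sq:
  fixes v w :: "'a::real_inner"
  assumes "norm v = 1" "norm w = 1"
  shows "(norm (v + w))\<^sup>2 = 2 + 2 * (v \<bullet> w)" "(norm (v - w))\<^sup>2 = 2 - 2 * (v \<bullet> w)"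
  using assms by (simp_all add: power2_norm_eq_inner inner_add inner_diff inner_commute norm_eq_1)

lemma inner_ge_cos_double:
  fixes u v w :: "'a::real_inner"
  assumes "norm u = 1" "norm v = 1" "norm w = 1"
    and "0 \<le> cos \<alpha>" "cos \<alpha> \<le> v \<bullet> u" "cos \<alpha> \<le> w \<bullet> u"
  shows "cos (2 * \<alpha>) \<le> v \<bullet> w"
proof -
  have "2 * cos \<alpha> \<le> (v + w) \<bullet> u" using assms(5,6) by (simp add: inner_add_left)
  also have "\<dots> \<le> norm (v + w)" using norm_cauchy_schwarz[of "v + w" u] assms(1) by simp
  finally have "(2 * cos \<alpha>)\<^sup>2 \<le> (norm (v + w))\<^sup>2" using assms(4) by (intro power_mono) auto
  then show ?thesis
    using norm_add_unit_sq(1)[OF assms(2,3)] by (simp add: cos_double_cos power_mult_distrib)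
qed

lemma norm_diff_le_two_sin:
  fixes v w :: "'a::real_inner"
  assumes "norm v = 1" "norm w = 1" "cos (2 * \<alpha>) \<le> v \<bullet> w" "0 \<le> sin \<alpha>"
  shows "norm (v - w) \<le> 2 * sin \<alpha>"
proof (rule power2_le_imp_le)
  show "(norm (v - w))\<^sup>2 \<le> (2 * sin \<alpha>)\<^sup>2"
    using norm_add_unit_sq(2)[OF assms(1,2)] assms(3) by (simp add: cos_double_sin power_mult_distrib)
qed (use assms(4) in simp)

lemma inner_nonpos_if_beyond_right_angle:
  fixes w e f :: "'a::real_inner"
  assumes "norm w = 1" "norm e = 1" "norm f = 1"
    and "e \<bullet> f = - sin \<theta>" "0 \<le> cos \<theta>" "0 \<le> sin \<theta>" "cos \<theta> \<le> w \<bullet> e"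
  shows "w \<bullet> f \<le> 0"
proof -
  define p where "p = f + sin \<theta> *\<^sub>R e"
  define q where "q = w - (w \<bullet> e) *\<^sub>R e"
  have "(norm p)\<^sup>2 = (cos \<theta>)\<^sup>2"
    unfolding p_def power2_norm_eq_inner cos_squared_eq using assms(2-4)
    by (simp add: inner_add inner_commute norm_eq_1 algebra_simps power2_eq_square)
  then have norm_p: "norm p = cos \<theta>" using assms(5) by (simp add: power2_eq_iff_nonneg)
  have "(norm q)\<^sup>2 = 1 - (w \<bullet> e)\<^sup>2"
    unfolding q_def power2_norm_eq_inner using assms(1,2)
    by (simp add: inner_diff inner_commute norm_eq_1 algebra_simps power2_eq_square)
  also have "\<dots> \<le> (sin \<theta>)\<^sup>2"
    using power_mono[OF assms(7,5), of 2] by (simp add: sin_squared_eq)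
  finally have norm_q: "norm q \<le> sin \<theta>" using assms(6) by (rule power2_le_imp_le)
  have "w \<bullet> f = q \<bullet> p - sin \<theta> * (w \<bullet> e)"
    unfolding p_def q_def using assms(2,4)
    by (simp add: inner_add inner_diff inner_commute norm_eq_1 algebra_simps)
  also have "\<dots> \<le> sin \<theta> * cos \<theta> - sin \<theta> * cos \<theta>"
  proof (rule diff_mono)
    show "q \<bullet> p \<le> sin \<theta> * cos \<theta>"
      using norm_cauchy_schwarz[of q p] mult_mono[OF norm_q] norm_p assms(5,6) by fastforce
    show "sin \<theta> * cos \<theta> \<le> sin \<theta> * (w \<bullet> e)" using assms(7,6) by (rule mult_left_mono)
  qed
  finally show ?thesis by simp
qed

lemma abs_mult_diff_le:
  fixes a b k R r r' :: real
  assumes "\<bar>a - b\<bar> \<le> k" "\<bar>a\<bar> \<le> k" "\<bar>b\<bar> \<le> k" "0 \<le> r" "r \<le> R" "0 \<le> r'" "r' \<le> R"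
  shows "\<bar>r * a - r' * b\<bar> \<le> R * k"
proof -
  have k: "0 \<le> k" using assms(2) by linarith
  have "\<bar>r * a - r' * b\<bar> \<le> max r r' * k"
  proof (cases "r' \<le> r")
    case True
    have "\<bar>r * a - r' * b\<bar> = \<bar>(r - r') * a + r' * (a - b)\<bar>" by (simp add: algebra_simps)
    also have "\<dots> \<le> (r - r') * k + r' * k"
      using True assms by (intro order_trans[OF abs_triangle_ineq] add_mono)
        (auto simp: abs_mult intro: mult_left_mono)
    finally show ?thesis using True by (simp add: left_diff_distrib)
  next
    case False
    have "\<bar>r * a - r' * b\<bar> = \<bar>r * (a - b) - (r' - r) * b\<bar>" by (simp add: algebra_simps)
    also have "\<dots> \<le> r * k + (r' - r) * k"
      using False assms by (intro order_trans[OF abs_triangle_ineq4] add_mono)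
        (auto simp: abs_mult intro: mult_left_mono)
    finally show ?thesis using False by (simp add: left_diff_distrib)
  qed
  also have "\<dots> \<le> R * k" using assms(5,7) k by (intro mult_right_mono) auto
  finally show ?thesis .
qed

text \<open>The cone at \<open>q\<close> lies in the half-space \<open>(z - q) \<bullet> e \<le> 0\<close>, whereas a point at distance
  \<open>r\<close> from \<open>p\<close> in the cone at \<open>p\<close> lies at least \<open>r cos 2\<alpha>\<close> beyond \<open>p\<close> in direction \<open>e\<close>.\<close>
lemma circular_cone_radius_bound:
  fixes e f u w v p q :: "'a::real_inner"
  assumes "norm e = 1" "norm f = 1" "e \<bullet> f = - sin (2 * \<alpha>)" "0 \<le> \<alpha>" "\<alpha> \<le> pi / 4"
    and "norm u = 1" "norm w = 1" "cos \<alpha> \<le> e \<bullet> u" "cos \<alpha> \<le> f \<bullet> w"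
    and "norm v = 1" "cos \<alpha> \<le> v \<bullet> u" "0 \<le> r" "p + r *\<^sub>R v \<in> circular_cone \<alpha> q w"
  shows "r * cos (2 * \<alpha>) \<le> (q - p) \<bullet> e"
proof -
  have cos_nonneg: "0 \<le> cos \<alpha>" "0 \<le> cos (2 * \<alpha>)" and sin_nonneg: "0 \<le> sin (2 * \<alpha>)"
    using assms(4,5) by (auto intro!: cos_ge_zero sin_ge_zero)
  obtain r' w' where x: "p + r *\<^sub>R v = q + r' *\<^sub>R w'" "0 \<le> r'" "norm w' = 1" "cos \<alpha> \<le> w' \<bullet> w"
    using assms(13) unfolding circular_cone_def by blast
  have "w' \<bullet> e \<le> 0"
  proof (rule inner_nonpos_if_beyond_right_angle[OF x(3) assms(2,1)])
    show "f \<bullet> e = - sin (2 * \<alpha>)" using assms(3) by (simp add: inner_commute)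
    show "cos (2 * \<alpha>) \<le> w' \<bullet> f"
      using inner_ge_cos_double[OF assms(7) x(3) assms(2) cos_nonneg(1) x(4) assms(9)] .
  qed (use cos_nonneg sin_nonneg in auto)
  then have "(p + r *\<^sub>R v) \<bullet> e \<le> q \<bullet> e"
    using x(1,2) by (simp add: inner_add_left mult_nonneg_nonpos)
  moreover have "r * cos (2 * \<alpha>) \<le> r * (v \<bullet> e)"
    using inner_ge_cos_double[OF assms(6,10,1) cos_nonneg(1) assms(11,8)] assms(12)
    by (rule mult_left_mono)
  ultimately show ?thesis by (simp add: inner_add_left inner_diff_left)
qed

lemma circular_cone_lateral_bound:
  fixes e n u v v' :: "'a::real_inner"
  assumes "norm e = 1" "norm n = 1" "e \<bullet> n = 0" "norm u = 1" "cos \<alpha> \<le> e \<bullet> u"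
    and "0 \<le> cos \<alpha>" "0 \<le> sin \<alpha>"
    and "norm v = 1" "cos \<alpha> \<le> v \<bullet> u" "norm v' = 1" "cos \<alpha> \<le> v' \<bullet> u"
    and "0 \<le> r" "r \<le> R" "0 \<le> r'" "r' \<le> R"
  shows "\<bar>(r *\<^sub>R v - r' *\<^sub>R v') \<bullet> n\<bar> \<le> R * (2 * sin \<alpha>)"
proof -
  have chord: "\<bar>(a - b) \<bullet> n\<bar> \<le> 2 * sin \<alpha>"
    if "norm a = 1" "cos \<alpha> \<le> a \<bullet> u" "norm b = 1" "cos \<alpha> \<le> b \<bullet> u" for a b
    using Cauchy_Schwarz_ineq2[of "a - b" n] assms(2)
      norm_diff_le_two_sin[OF that(1,3)
        inner_ge_cos_double[OF assms(4) that(1,3) assms(6) that(2,4)] assms(7)]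
    by simp
  have "\<bar>v \<bullet> n\<bar> \<le> 2 * sin \<alpha>" "\<bar>v' \<bullet> n\<bar> \<le> 2 * sin \<alpha>"
    using chord[OF assms(8,9,1,5)] chord[OF assms(10,11,1,5)] assms(3) by (simp_all add: inner_diff_left)
  moreover have "\<bar>v \<bullet> n - v' \<bullet> n\<bar> \<le> 2 * sin \<alpha>"
    using chord[OF assms(8-11)] by (simp add: inner_diff_left)
  ultimately show ?thesis
    using abs_mult_diff_le assms(12-15) by (simp add: inner_diff_left)
qed

lemma two_circular_cones_lateral_bound:
  fixes e f n u w x y p q :: "'a::real_inner"
  assumes "norm e = 1" "norm f = 1" "norm n = 1" "e \<bullet> f = - sin (2 * \<alpha>)" "e \<bullet> n = 0"
    and "0 \<le> \<alpha>" "\<alpha> < pi / 4"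
    and "norm u = 1" "norm w = 1" "cos \<alpha> \<le> e \<bullet> u" "cos \<alpha> \<le> f \<bullet> w"
    and "x \<in> circular_cone \<alpha> p u \<inter> circular_cone \<alpha> q w"
    and "y \<in> circular_cone \<alpha> p u \<inter> circular_cone \<alpha> q w"
  shows "\<bar>(x - y) \<bullet> n\<bar> * cos (2 * \<alpha>) \<le> 2 * sin \<alpha> * ((q - p) \<bullet> e)"
proof -
  have cos_pos: "0 < cos (2 * \<alpha>)" using assms(6,7) by (intro cos_gt_zero_pi) auto
  have trig: "0 \<le> cos \<alpha>" "0 \<le> sin \<alpha>" using assms(6,7) by (auto intro!: cos_ge_zero sin_ge_zero)
  define R where "R = (q - p) \<bullet> e / cos (2 * \<alpha>)"
  obtain r v where x: "x = p + r *\<^sub>R v" "0 \<le> r" "norm v = 1" "cos \<alpha> \<le> v \<bullet> u"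
    using assms(12) unfolding circular_cone_def by blast
  obtain r' v' where y: "y = p + r' *\<^sub>R v'" "0 \<le> r'" "norm v' = 1" "cos \<alpha> \<le> v' \<bullet> u"
    using assms(13) unfolding circular_cone_def by blast
  have "r \<le> R" "r' \<le> R"
    using circular_cone_radius_bound[OF assms(1,2,4,6) _ assms(8-11) x(3,4,2)]
      circular_cone_radius_bound[OF assms(1,2,4,6) _ assms(8-11) y(3,4,2)]
      assms(7,12,13) x(1) y(1) cos_pos
    by (auto simp: R_def pos_le_divide_eq)
  then have "\<bar>(x - y) \<bullet> n\<bar> \<le> R * (2 * sin \<alpha>)"
    using circular_cone_lateral_bound[OF assms(1,3,5,8,10) trig x(3,4) y(3,4) x(2) _ y(2)]
    by (simp add: x(1) y(1))
  then show ?thesis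
    using cos_pos by (simp add: R_def pos_divide_le_eq[symmetric] field_simps)
qed

lemma abs_mult_norm_le_if_inner_le:
  fixes z :: pt and a b K :: real
  assumes "a\<^sup>2 \<le> b\<^sup>2" "\<bar>z \<bullet> (a, b)\<bar> \<le> K" "\<bar>z \<bullet> (- a, b)\<bar> \<le> K"
  shows "\<bar>a\<bar> * norm z \<le> K"
proof (rule power2_le_imp_le)
  obtain z1 z2 where z: "z = (z1, z2)" by (cases z)
  have "2 * (\<bar>a\<bar> * norm z)\<^sup>2 = 2 * a\<^sup>2 * z1\<^sup>2 + 2 * a\<^sup>2 * z2\<^sup>2"
    unfolding z power_mult_distrib power2_norm_eq_inner by (simp add: algebra_simps power2_eq_square)
  also have "\<dots> \<le> 2 * a\<^sup>2 * z1\<^sup>2 + 2 * b\<^sup>2 * z2\<^sup>2"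
    using assms(1) by (intro add_left_mono mult_right_mono) auto
  also have "\<dots> = \<bar>z \<bullet> (a, b)\<bar>\<^sup>2 + \<bar>z \<bullet> (- a, b)\<bar>\<^sup>2"
    by (simp add: z algebra_simps power2_eq_square)
  also have "\<dots> \<le> K\<^sup>2 + K\<^sup>2" using assms(2,3) by (intro add_mono power_mono) auto
  finally show "(\<bar>a\<bar> * norm z)\<^sup>2 \<le> K\<^sup>2" by simp
  show "0 \<le> K" using assms(2) by linarith
qed

lemma one_plus_sin_div_cos_double_le:
  fixes \<alpha> :: real
  assumes "0 \<le> \<alpha>" "\<alpha> < 1/4"
  shows "(1 + sin (2 * \<alpha>)) / cos (2 * \<alpha>) \<le> cos \<alpha> * sqrt ((1 + 2 * \<alpha>) / (1 - 4 * \<alpha>))"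
proof -
  define S where "S = sin (2 * \<alpha>)"
  have pi: "3 < pi" by (rule pi_gt3)
  have S: "0 \<le> S" "S \<le> 2 * \<alpha>" unfolding S_def using assms pi by (auto intro!: sin_ge_zero sin_x_le_x)
  have C: "0 < cos (2 * \<alpha>)" using assms pi by (intro cos_gt_zero_pi) auto
  have C_sq: "(cos (2 * \<alpha>))\<^sup>2 = (1 + S) * (1 - S)"
    unfolding S_def cos_squared_eq by (simp add: algebra_simps power2_eq_square)
  have cos_sq: "1 - \<alpha>\<^sup>2 \<le> (cos \<alpha>)\<^sup>2"
    using power_mono[OF sin_x_le_x[OF assms(1)] sin_ge_zero[of \<alpha>], of 2] assms pi
    by (simp add: cos_squared_eq)
  \<comment> \<open>after squaring, \<open>S \<le> 2\<alpha>\<close> and \<open>cos\<^sup>2 \<alpha> \<ge> 1 - \<alpha>\<^sup>2\<close> leave a polynomial inequality\<close>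
  have "(1 + S) * (1 - 4 * \<alpha>) \<le> (1 - \<alpha>\<^sup>2) * (1 + 2 * \<alpha>) * (1 - S)"
  proof -
    have "(1 - \<alpha>\<^sup>2) * (1 + 2 * \<alpha>) * (1 - S) - (1 + S) * (1 - 4 * \<alpha>)
        = (2 * \<alpha> - S) * ((1 - \<alpha>\<^sup>2) * (1 + 2 * \<alpha>) + (1 - 4 * \<alpha>))
          + (1 + 2 * \<alpha>) * \<alpha> * (2 - \<alpha> + 2 * \<alpha>\<^sup>2)"
      by (simp add: algebra_simps power2_eq_square)
    moreover have "0 \<le> (2 * \<alpha> - S) * ((1 - \<alpha>\<^sup>2) * (1 + 2 * \<alpha>) + (1 - 4 * \<alpha>))"
      using S assms mult_le_one[of \<alpha> \<alpha>]
      by (intro mult_nonneg_nonneg)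
        (auto simp: power2_eq_square intro!: add_nonneg_nonneg mult_nonneg_nonneg)
    moreover have "0 \<le> (1 + 2 * \<alpha>) * \<alpha> * (2 - \<alpha> + 2 * \<alpha>\<^sup>2)"
      using assms by (intro mult_nonneg_nonneg) auto
    ultimately show ?thesis by linarith
  qed
  also have "\<dots> \<le> (cos \<alpha>)\<^sup>2 * (1 + 2 * \<alpha>) * (1 - S)"
    using cos_sq S assms by (intro mult_right_mono) auto
  finally have "(1 + S) / (1 - S) \<le> (cos \<alpha>)\<^sup>2 * ((1 + 2 * \<alpha>) / (1 - 4 * \<alpha>))"
    using S assms by (simp add: field_simps)
  have "((1 + S) / cos (2 * \<alpha>))\<^sup>2 = (1 + S) * (1 + S) / ((1 + S) * (1 - S))"
    unfolding power_divide C_sq by (simp only: power2_eq_square)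
  also have "\<dots> = (1 + S) / (1 - S)"
    using S by (intro mult_divide_mult_cancel_left) auto
  also have "\<dots> \<le> (cos \<alpha>)\<^sup>2 * ((1 + 2 * \<alpha>) / (1 - 4 * \<alpha>))" by fact
  also have "\<dots> = (cos \<alpha> * sqrt ((1 + 2 * \<alpha>) / (1 - 4 * \<alpha>)))\<^sup>2"
    using assms
    by (simp only: power_mult_distrib real_sqrt_pow2[of "(1 + 2 * \<alpha>) / (1 - 4 * \<alpha>)"]) simp
  finally show ?thesis
    unfolding S_def
    by (rule power2_le_imp_le) (use assms pi in \<open>auto intro!: mult_nonneg_nonneg cos_ge_zero\<close>)
qed

lemma eps_le_if_dist_le:
  assumes "0 \<le> B"
    and "\<And>W x y. \<forall>s\<in>C. W s \<in> wedges \<alpha> g s \<Longrightarrow> x \<in> (\<Inter>s\<in>C. W s) \<Longrightarrow> y \<in> (\<Inter>s\<in>C. W s)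
      \<Longrightarrow> dist x y \<le> B"
  shows "eps \<alpha> g C \<le> ereal B"
  unfolding eps_def ediam_def using assms by (fastforce intro!: Sup_least)

lemma pi_quarter_minus_sin_cos:
  fixes \<alpha> :: real
  assumes "0 \<le> \<alpha>" "\<alpha> < pi / 4"
  shows "0 < sin (pi / 4 - \<alpha>)" "0 < cos (pi / 4 - \<alpha>)"
    "(cos (pi / 4 - \<alpha>))\<^sup>2 - (sin (pi / 4 - \<alpha>))\<^sup>2 = sin (2 * \<alpha>)"
proof -
  show "0 < sin (pi / 4 - \<alpha>)" "0 < cos (pi / 4 - \<alpha>)"
    using assms by (auto intro!: sin_gt_zero cos_gt_zero_pi)
  show "(cos (pi / 4 - \<alpha>))\<^sup>2 - (sin (pi / 4 - \<alpha>))\<^sup>2 = sin (2 * \<alpha>)"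
    unfolding cos_double[symmetric] by (simp add: right_diff_distrib sin_cos_eq)
qed

lemma lateral_bounds_in_two_wedges:
  fixes h \<alpha> t :: real and u w x y :: pt
  defines "\<beta> \<equiv> pi / 4 - \<alpha>"
  assumes "0 < h" "0 \<le> \<alpha>" "\<alpha> < pi / 4" "t = 2 * h / tan \<beta>"
    and "norm u = 1" "norm w = 1"
    and "(0, 0) \<in> wedge \<alpha> (- t / 2, h) u" "(0, 0) \<in> wedge \<alpha> (t / 2, h) w"
    and "x \<in> wedge \<alpha> (- t / 2, h) u \<inter> wedge \<alpha> (t / 2, h) w"
    and "y \<in> wedge \<alpha> (- t / 2, h) u \<inter> wedge \<alpha> (t / 2, h) w"
  shows "\<bar>(x - y) \<bullet> (sin \<beta>, cos \<beta>)\<bar> * cos (2 * \<alpha>) \<le> 2 * sin \<alpha> * (t * cos \<beta>)"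
    "\<bar>(x - y) \<bullet> (- sin \<beta>, cos \<beta>)\<bar> * cos (2 * \<alpha>) \<le> 2 * sin \<alpha> * (t * cos \<beta>)"
proof -
  \<comment> \<open>\<open>e_P\<close>, \<open>e_Q\<close> point from the cameras to the target, \<open>n_P\<close>, \<open>n_Q\<close> are normal to them\<close>
  define e_P e_Q n_P n_Q :: pt
    where directions: "e_P = (cos \<beta>, - sin \<beta>)" "e_Q = (- cos \<beta>, - sin \<beta>)"
      "n_P = (sin \<beta>, cos \<beta>)" "n_Q = (- sin \<beta>, cos \<beta>)"
  define d where "d = h / sin \<beta>"
  note \<beta> = pi_quarter_minus_sin_cos[OF assms(3,4), folded \<beta>_def]
  have d: "0 < d" using assms(2) \<beta> by (simp add: d_def)
  have units: "norm e_P = 1" "norm e_Q = 1" "norm n_P = 1" "norm n_Q = 1"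
    by (simp_all add: directions norm_eq_1 power2_eq_square[symmetric])
  have inners: "e_P \<bullet> e_Q = - sin (2 * \<alpha>)" "e_Q \<bullet> e_P = - sin (2 * \<alpha>)"
    "e_P \<bullet> n_P = 0" "e_Q \<bullet> n_Q = 0"
    using \<beta>(3) by (auto simp: directions power2_eq_square)
  have cameras: "(0, 0) = (- t / 2, h) + d *\<^sub>R e_P" "(0, 0) = (t / 2, h) + d *\<^sub>R e_Q"
    using assms(5) \<beta> by (simp_all add: directions d_def tan_def)
  have "\<alpha> \<le> pi" using assms(4) pi_gt3 by linarith
  then have cones: "wedge \<alpha> (- t / 2, h) u \<subseteq> circular_cone \<alpha> (- t / 2, h) u"
    "wedge \<alpha> (t / 2, h) w \<subseteq> circular_cone \<alpha> (t / 2, h) w"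
    using assms(3,6,7) by (simp_all add: wedge_subset_circular_cone)
  have axes: "cos \<alpha> \<le> e_P \<bullet> u" "cos \<alpha> \<le> e_Q \<bullet> w"
    using circular_cone_axis[OF _ d units(1)] circular_cone_axis[OF _ d units(2)]
      cones assms(8,9) cameras by (metis subsetD)+
  show "\<bar>(x - y) \<bullet> (sin \<beta>, cos \<beta>)\<bar> * cos (2 * \<alpha>) \<le> 2 * sin \<alpha> * (t * cos \<beta>)"
    "\<bar>(x - y) \<bullet> (- sin \<beta>, cos \<beta>)\<bar> * cos (2 * \<alpha>) \<le> 2 * sin \<alpha> * (t * cos \<beta>)"
    using two_circular_cones_lateral_bound[OF units(1,2,3) inners(1,3) assms(3,4,6,7) axes,
        of x "(- t / 2, h)" "(t / 2, h)" y]
      two_circular_cones_lateral_bound[OF units(2,1,4) inners(2,4) assms(3,4,7,6) axes(2,1),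
        of x "(t / 2, h)" "(- t / 2, h)" y]
      assms(10,11) cones
    by (auto simp: directions)
qed

lemma dist_in_two_wedges_le:
  fixes h \<alpha> t :: real and u w x y :: pt
  assumes "0 < h" "0 \<le> \<alpha>" "\<alpha> < pi / 4" "t = 2 * h / tan (pi / 4 - \<alpha>)"
    and "norm u = 1" "norm w = 1"
    and "(0, 0) \<in> wedge \<alpha> (- t / 2, h) u" "(0, 0) \<in> wedge \<alpha> (t / 2, h) w"
    and "x \<in> wedge \<alpha> (- t / 2, h) u \<inter> wedge \<alpha> (t / 2, h) w"
    and "y \<in> wedge \<alpha> (- t / 2, h) u \<inter> wedge \<alpha> (t / 2, h) w"
  shows "dist x y * (cos (2 * \<alpha>) * (1 - sin (2 * \<alpha>))) \<le> 4 * sin \<alpha> * h * (1 + sin (2 * \<alpha>))"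
proof -
  define \<beta> where "\<beta> = pi / 4 - \<alpha>"
  note \<beta> = pi_quarter_minus_sin_cos[OF assms(2,3), folded \<beta>_def]
  have C: "0 < cos (2 * \<alpha>)" using assms(2,3) by (intro cos_gt_zero_pi) auto
  define K where "K = 2 * sin \<alpha> * (t * cos \<beta>) / cos (2 * \<alpha>)"
  have "\<bar>(x - y) \<bullet> (sin \<beta>, cos \<beta>)\<bar> \<le> K" "\<bar>(x - y) \<bullet> (- sin \<beta>, cos \<beta>)\<bar> \<le> K"
    using lateral_bounds_in_two_wedges[OF assms] C
    by (simp_all add: K_def \<beta>_def pos_le_divide_eq)
  moreover have "(sin \<beta>)\<^sup>2 \<le> (cos \<beta>)\<^sup>2"
    using \<beta>(3) sin_ge_zero[of "2 * \<alpha>"] assms(2,3) by simp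
  ultimately have lateral_dist: "sin \<beta> * dist x y \<le> K"
    using abs_mult_norm_le_if_inner_le \<beta> by (fastforce simp: dist_norm)
  have sin_cos_sq: "1 - sin (2 * \<alpha>) = 2 * (sin \<beta>)\<^sup>2" "1 + sin (2 * \<alpha>) = 2 * (cos \<beta>)\<^sup>2"
    using \<beta>(3) sin_cos_squared_add[of \<beta>] by linarith+
  have t: "t * sin \<beta> = 2 * h * cos \<beta>" using assms(4) \<beta> by (simp add: \<beta>_def tan_def)
  have "dist x y * (cos (2 * \<alpha>) * (1 - sin (2 * \<alpha>))) = 2 * sin \<beta> * cos (2 * \<alpha>) * (sin \<beta> * dist x y)"
    unfolding sin_cos_sq by (simp add: power2_eq_square)
  also have "\<dots> \<le> 2 * sin \<beta> * cos (2 * \<alpha>) * K"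
    using lateral_dist \<beta> C by (intro mult_left_mono) auto
  also have "\<dots> = 4 * sin \<alpha> * cos \<beta> * (t * sin \<beta>)" using C by (simp add: K_def)
  also have "\<dots> = 4 * sin \<alpha> * h * (1 + sin (2 * \<alpha>))"
    unfolding t sin_cos_sq by (simp add: power2_eq_square)
  finally show ?thesis .
qed

theorem lemma2:
  fixes h \<alpha> t :: real
  assumes "h > 0" and "0 \<le> \<alpha>" and "\<alpha> < 1/4"
    and "t = 2 * h / tan (pi/4 - \<alpha>)"
  shows "eps \<alpha> (0, 0) {(- t/2, h), (t/2, h)}
           \<le> ereal (sqrt ((1 + 2*\<alpha>) / (1 - 4*\<alpha>)) * (2 * h * sin (2*\<alpha>) / (1 - sin (2*\<alpha>))))"
proof (rule eps_le_if_dist_le)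
  let ?S = "sin (2 * \<alpha>)" and ?C = "cos (2 * \<alpha>)" and ?X = "sqrt ((1 + 2 * \<alpha>) / (1 - 4 * \<alpha>))"
  have \<alpha>: "\<alpha> < pi / 4" using assms(3) pi_gt3 by linarith
  have S: "0 \<le> ?S" "?S < 1" and C: "0 < ?C"
    using assms(2,3) \<alpha> sin_x_le_x[of "2 * \<alpha>"]
    by (auto intro!: sin_ge_zero cos_gt_zero_pi)
  have "4 * sin \<alpha> * h * (1 + ?S) / (?C * (1 - ?S)) = 4 * sin \<alpha> * h / (1 - ?S) * ((1 + ?S) / ?C)"
    by simp
  also have "\<dots> \<le> 4 * sin \<alpha> * h / (1 - ?S) * (cos \<alpha> * ?X)"
    using one_plus_sin_div_cos_double_le[OF assms(2,3)] sin_ge_zero[of \<alpha>] assms(1,2) \<alpha> S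
    by (intro mult_left_mono) auto
  also have "\<dots> = ?X * (2 * h * ?S / (1 - ?S))" by (simp add: sin_double)
  finally have bound: "4 * sin \<alpha> * h * (1 + ?S) / (?C * (1 - ?S)) \<le> ?X * (2 * h * ?S / (1 - ?S))" .
  show "0 \<le> ?X * (2 * h * ?S / (1 - ?S))"
    using assms(1,2,3) S by (intro mult_nonneg_nonneg divide_nonneg_pos) auto
  fix W x y
  assume "\<forall>s\<in>{(- t / 2, h), (t / 2, h)}. W s \<in> wedges \<alpha> (0, 0) s"
    "x \<in> (\<Inter>s\<in>{(- t / 2, h), (t / 2, h)}. W s)" "y \<in> (\<Inter>s\<in>{(- t / 2, h), (t / 2, h)}. W s)"
  then obtain u w where "norm u = 1" "norm w = 1"
    "(0, 0) \<in> wedge \<alpha> (- t / 2, h) u" "(0, 0) \<in> wedge \<alpha> (t / 2, h) w"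
    "x \<in> wedge \<alpha> (- t / 2, h) u \<inter> wedge \<alpha> (t / 2, h) w"
    "y \<in> wedge \<alpha> (- t / 2, h) u \<inter> wedge \<alpha> (t / 2, h) w"
    unfolding wedges_def by auto
  from dist_in_two_wedges_le[OF assms(1,2) \<alpha> assms(4) this] C S
  have "dist x y \<le> 4 * sin \<alpha> * h * (1 + ?S) / (?C * (1 - ?S))"
    by (simp add: pos_le_divide_eq)
  with bound show "dist x y \<le> ?X * (2 * h * ?S / (1 - ?S))" by linarith
qed

end
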